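(* In the setting described in the context, suppose that for every $i\in[k]$ and every $(\mathcal F_T)$-stopping time $\tau$ that is almost surely finite, there exist nonnegative random variables $E^+_{i\tau},E^-_{i\tau}$ (not depending on $\beta$) with $\mathbb E[E^+_{i\tau}]\le 1$, $\mathbb E[E^-_{i\tau}]\le 1$, such that for every $\beta\in(0,1)$, almost surely, $\mathbb I\{\theta_i\le L_{i\tau}(\beta)\}\le\mathbb I\{E^-_{i\tau}\ge 1/\beta\}$ and $\mathbb I\{\theta_i\ge U_{i\tau}(\beta)\}\le\mathbb I\{E^+_{i\tau}\ge 1/\beta\}$. Then for every $\alpha\in(0,1)$ and every almost surely finite $(\mathcal F_T)$-stopping time $\tau$, with $\tilde\alpha=\alpha|\hat{\mathcal S}_\tau|/(2k)$, we have $\mathrm{sFCR}(\tilde\alpha)\le\alpha$.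
   Context: Setting: $(\Omega,\mathcal F,\mathbb P)$ is a probability space with a filtration $(\mathcal F_T)_{T\in\mathbb N}$; $k\ge2$, $m\in\{1,\dots,k-1\}$, $\alpha\in(0,1)$; $\theta_1\ge\dots\ge\theta_k$ are real parameters; $[k]=\{1,\dots,k\}$. For each $i\in[k]$ and $\beta\in(0,1)$, $(L_{iT}(\beta))_{T}$ and $(U_{iT}(\beta))_T$ are $(\mathcal F_T)$-adapted processes with values in $[-\infty,\infty]$, with $L_{iT}(\beta)\le U_{iT}(\beta)$, satisfying $\mathbb P(\exists T\in\mathbb N:\theta_i\le L_{iT}(\beta))\le\beta$ and $\mathbb P(\exists T\in\mathbb N:\theta_i\ge U_{iT}(\beta))\le\beta$. SCS procedure: set $\alpha_{km}=\alpha/\{2m(k-m)\}$, $\hat{\mathcal S}_0=[k]$, and for $T\in\mathbb N$ let $L^{(m)}_T(\alpha_{km})$ be the $m$-th largest among $\{L_{iT}(\alpha_{km}):i\in\hat{\mathcal S}_{T-1}\}$ and $\hat{\mathcal S}_T=\hat{\mathcal S}_{T-1}\setminus\{i\in\hat{\mathcal S}_{T-1}:U_{iT}(\alpha_{km})<L^{(m)}_T(\alpha_{km})\}$. Stopped false coverage rate: for a stopping time $\tau$ and a (possibly random, $\mathcal F_\tau$-measurable) level $a$, $\mathrm{sFCR}(a)=\mathbb E\Big[\sum_{i\in\hat{\mathcal S}_\tau}\frac{\mathbb I\{\theta_i\notin(L_{i\tau}(a),U_{i\tau}(a))\}}{|\hat{\mathcal S}_\tau|}\Big]$. *)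

theory Defs
  imports "HOL-Probability.Probability"
begin

definition is_filtration :: "'a measure \<Rightarrow> (nat \<Rightarrow> 'a measure) \<Rightarrow> bool" where
  "is_filtration M F \<longleftrightarrow>
     (\<forall>T. space (F T) = space M \<and> sets (F T) \<subseteq> sets M) \<and>
     (\<forall>S T. S \<le> T \<longrightarrow> sets (F S) \<subseteq> sets (F T))"

definition is_stopping_time :: "'a measure \<Rightarrow> (nat \<Rightarrow> 'a measure) \<Rightarrow> ('a \<Rightarrow> enat) \<Rightarrow> bool" where
  "is_stopping_time M F \<tau> \<longleftrightarrow>
     (\<forall>\<omega>\<in>space M. 1 \<le> \<tau> \<omega>) \<and>
     (\<forall>T. {\<omega>\<in>space M. \<tau> \<omega> \<le> enat T} \<in> sets (F T))"

definition stopped :: "(nat \<Rightarrow> 'a \<Rightarrow> 'b) \<Rightarrow> ('a \<Rightarrow> enat) \<Rightarrow> 'a \<Rightarrow> 'b" where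
  "stopped X \<tau> \<omega> = X (the_enat (\<tau> \<omega>)) \<omega>"

definition mth_largest :: "nat \<Rightarrow> nat set \<Rightarrow> (nat \<Rightarrow> ereal) \<Rightarrow> ereal" where
  "mth_largest m S f = rev (sort (map f (sorted_list_of_set S))) ! (m - 1)"

text \<open>The SCS procedure: Shat k m a L U T \<omega> is the selected set after step T,
  with L i T a \<omega>, U i T a \<omega> the bounds of arm i at time T and level a.\<close>
fun Shat :: "nat \<Rightarrow> nat \<Rightarrow> real \<Rightarrow> (nat \<Rightarrow> nat \<Rightarrow> real \<Rightarrow> 'a \<Rightarrow> ereal)
              \<Rightarrow> (nat \<Rightarrow> nat \<Rightarrow> real \<Rightarrow> 'a \<Rightarrow> ereal) \<Rightarrow> nat \<Rightarrow> 'a \<Rightarrow> nat set" where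
  "Shat k m a L U 0 \<omega> = {1..k}"
| "Shat k m a L U (Suc T) \<omega> =
     (let S = Shat k m a L U T \<omega>;
          Lm = mth_largest m S (\<lambda>i. L i (Suc T) a \<omega>)
      in {i \<in> S. \<not> (U i (Suc T) a \<omega> < Lm)})"

end

theory Submission imports Defs begin

text \<open>Pointwise Markov, \<open>I{E \<ge> 1/\<beta>} \<le> \<beta> E\<close>, bounds the miscoverage of a selected arm at
  level \<open>\<beta> = \<alpha> |S|/(2k)\<close> by \<open>\<alpha> |S|/(2k)\<close> times the sum of its two e-values. The factor \<open>|S|\<close>
  cancels the normalisation of the false coverage proportion; summing over all \<open>k\<close> arms
  instead of the random set \<open>S\<close> removes the selection, and the \<open>2k\<close> e-values have
  expectation at most one each. Apart from \<open>S \<subseteq> [k]\<close>, nothing about the SCS procedure or the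
  confidence sequences is used.\<close>

definition evalue_pair ::
    "'a measure \<Rightarrow> real \<Rightarrow> (real \<Rightarrow> 'a \<Rightarrow> ereal) \<Rightarrow> (real \<Rightarrow> 'a \<Rightarrow> ereal)
      \<Rightarrow> ('a \<Rightarrow> real) \<Rightarrow> ('a \<Rightarrow> real) \<Rightarrow> bool" where
  "evalue_pair M \<theta> l u Ep Em \<longleftrightarrow>
     Ep \<in> borel_measurable M \<and> Em \<in> borel_measurable M \<and>
     (\<forall>\<omega>\<in>space M. 0 \<le> Ep \<omega> \<and> 0 \<le> Em \<omega>) \<and>
     (\<integral>\<^sup>+ \<omega>. ennreal (Ep \<omega>) \<partial>M) \<le> 1 \<and>
     (\<integral>\<^sup>+ \<omega>. ennreal (Em \<omega>) \<partial>M) \<le> 1 \<and>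
     (\<forall>\<beta>. 0 < \<beta> \<longrightarrow> \<beta> < 1 \<longrightarrow>
        (AE \<omega> in M.
           indicator {\<omega>. ereal \<theta> \<le> l \<beta> \<omega>} \<omega> \<le> (indicator {\<omega>. Em \<omega> \<ge> 1 / \<beta>} \<omega> :: real) \<and>
           indicator {\<omega>. ereal \<theta> \<ge> u \<beta> \<omega>} \<omega> \<le> (indicator {\<omega>. Ep \<omega> \<ge> 1 / \<beta>} \<omega> :: real)))"

lemma evalue_pair_sum:
  assumes "evalue_pair M \<theta> l u Ep Em"
  shows evalue_pair_sum_measurable: "(\<lambda>\<omega>. Em \<omega> + Ep \<omega>) \<in> borel_measurable M"
    and evalue_pair_sum_nonneg: "\<And>\<omega>. \<omega> \<in> space M \<Longrightarrow> 0 \<le> Em \<omega> + Ep \<omega>"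
    and evalue_pair_sum_nn_integral: "(\<integral>\<^sup>+ \<omega>. ennreal (Em \<omega> + Ep \<omega>) \<partial>M) \<le> 2"
proof -
  show "(\<lambda>\<omega>. Em \<omega> + Ep \<omega>) \<in> borel_measurable M" "\<And>\<omega>. \<omega> \<in> space M \<Longrightarrow> 0 \<le> Em \<omega> + Ep \<omega>"
    using assms by (auto simp: evalue_pair_def)
  have "(\<integral>\<^sup>+ \<omega>. ennreal (Em \<omega> + Ep \<omega>) \<partial>M)
      = (\<integral>\<^sup>+ \<omega>. ennreal (Em \<omega>) \<partial>M) + (\<integral>\<^sup>+ \<omega>. ennreal (Ep \<omega>) \<partial>M)"
    using assms by (subst nn_integral_add[symmetric])
      (auto simp: evalue_pair_def intro!: nn_integral_cong ennreal_plus)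
  also have "\<dots> \<le> 1 + 1"
    using assms by (intro add_mono) (auto simp: evalue_pair_def)
  finally show "(\<integral>\<^sup>+ \<omega>. ennreal (Em \<omega> + Ep \<omega>) \<partial>M) \<le> 2"
    by simp
qed

lemma nn_integral_sum_le:
  assumes "finite I"
    and "\<And>i. i \<in> I \<Longrightarrow> f i \<in> borel_measurable M"
    and "\<And>i \<omega>. i \<in> I \<Longrightarrow> \<omega> \<in> space M \<Longrightarrow> 0 \<le> f i \<omega>"
    and "\<And>i. i \<in> I \<Longrightarrow> (\<integral>\<^sup>+ \<omega>. ennreal (f i \<omega>) \<partial>M) \<le> B"
  shows "(\<integral>\<^sup>+ \<omega>. ennreal (\<Sum>i\<in>I. f i \<omega>) \<partial>M) \<le> of_nat (card I) * B"
proof -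
  have "(\<integral>\<^sup>+ \<omega>. ennreal (\<Sum>i\<in>I. f i \<omega>) \<partial>M) = (\<integral>\<^sup>+ \<omega>. (\<Sum>i\<in>I. ennreal (f i \<omega>)) \<partial>M)"
    using assms(3) by (intro nn_integral_cong) (simp add: sum_ennreal)
  also have "\<dots> = (\<Sum>i\<in>I. \<integral>\<^sup>+ \<omega>. ennreal (f i \<omega>) \<partial>M)"
    using assms(2) by (intro nn_integral_sum) auto
  also have "\<dots> \<le> (\<Sum>i\<in>I. B)"
    using assms(4) by (rule sum_mono)
  finally show ?thesis by simp
qed

lemma false_coverage_average_le:
  fixes \<theta> em ep :: "nat \<Rightarrow> real" and l u :: "nat \<Rightarrow> ereal" and c :: real
  assumes I: "finite I" "S \<subseteq> I" and c: "0 < c"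
    and nonneg: "\<And>i. i \<in> I \<Longrightarrow> 0 \<le> em i" "\<And>i. i \<in> I \<Longrightarrow> 0 \<le> ep i"
    and lower: "\<And>i. i \<in> S \<Longrightarrow> ereal (\<theta> i) \<le> l i \<Longrightarrow> 1 / (c * card S) \<le> em i"
    and upper: "\<And>i. i \<in> S \<Longrightarrow> u i \<le> ereal (\<theta> i) \<Longrightarrow> 1 / (c * card S) \<le> ep i"
  shows "(\<Sum>i\<in>S. of_bool (ereal (\<theta> i) \<notin> {l i <..< u i}) / real (card S))
           \<le> c * (\<Sum>i\<in>I. em i + ep i)"
proof (cases "S = {}")
  case True
  then show ?thesis
    using c nonneg by (simp add: sum_nonneg)
next
  case False
  define b where "b = c * card S"
  have card: "0 < card S"
    using False I finite_subset by (simp add: card_gt_0_iff) blast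
  then have b: "0 < b"
    using c by (simp add: b_def)
  have markov: "of_bool P \<le> b * x" if "P \<Longrightarrow> 1 / b \<le> x" "0 \<le> x" for P and x :: real
    using that b by (cases P) (auto simp: field_simps)
  have "of_bool (ereal (\<theta> i) \<notin> {l i <..< u i}) / real (card S) \<le> c * (em i + ep i)"
    if i: "i \<in> S" for i
  proof -
    have "of_bool (ereal (\<theta> i) \<notin> {l i <..< u i})
          \<le> (of_bool (ereal (\<theta> i) \<le> l i) + of_bool (u i \<le> ereal (\<theta> i)) :: real)"
      by auto
    also have "\<dots> \<le> b * em i + b * ep i"
      using i I lower upper nonneg by (intro add_mono markov) (auto simp: b_def)
    finally show ?thesis
      using card by (simp add: b_def field_simps)
  qed
  then have "(\<Sum>i\<in>S. of_bool (ereal (\<theta> i) \<notin> {l i <..< u i}) / real (card S))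
              \<le> (\<Sum>i\<in>S. c * (em i + ep i))"
    by (rule sum_mono)
  also have "\<dots> \<le> (\<Sum>i\<in>I. c * (em i + ep i))"
    using I c nonneg by (intro sum_mono2) auto
  finally show ?thesis
    by (simp add: sum_distrib_left)
qed

lemma AE_false_coverage_average_le:
  fixes S :: "'a \<Rightarrow> nat set" and \<theta> :: "nat \<Rightarrow> real" and c :: real
    and l u :: "nat \<Rightarrow> real \<Rightarrow> 'a \<Rightarrow> ereal" and Ep Em :: "nat \<Rightarrow> 'a \<Rightarrow> real"
  assumes I: "finite I" and S: "\<And>\<omega>. S \<omega> \<subseteq> I" and c: "0 < c" "c * card I < 1"
    and E: "\<And>i. i \<in> I \<Longrightarrow> evalue_pair M (\<theta> i) (l i) (u i) (Ep i) (Em i)"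
  shows "AE \<omega> in M.
      (\<Sum>i\<in>S \<omega>. indicator {\<omega>. ereal (\<theta> i) \<notin>
        {l i (c * card (S \<omega>)) \<omega> <..< u i (c * card (S \<omega>)) \<omega>}} \<omega> / real (card (S \<omega>)))
      \<le> c * (\<Sum>i\<in>I. Em i \<omega> + Ep i \<omega>)"
proof -
  have level: "0 < c * j \<and> c * j < 1" if "j \<in> {1..card I}" for j
  proof -
    have "c * j \<le> c * card I"
      using that c by simp
    moreover have "0 < c * j"
      using that c by simp
    ultimately show ?thesis
      using c by linarith
  qed
  \<comment> \<open>The level \<open>c |S \<omega>|\<close> is random, but it takes only the finitely many values \<open>c j\<close>.\<close>
  have "AE \<omega> in M. \<forall>i\<in>I. \<forall>j\<in>{1..card I}.
          (ereal (\<theta> i) \<le> l i (c * j) \<omega> \<longrightarrow> 1 / (c * j) \<le> Em i \<omega>) \<and>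
          (u i (c * j) \<omega> \<le> ereal (\<theta> i) \<longrightarrow> 1 / (c * j) \<le> Ep i \<omega>)"
    using I E level by (intro AE_finite_allI finite_atLeastAtMost)
      (auto simp: evalue_pair_def indicator_def elim!: AE_mp)
  then show ?thesis
    using AE_space
  proof eventually_elim
    case (elim \<omega>)
    have card_S: "card (S \<omega>) \<in> {1..card I}" if "i \<in> S \<omega>" for i
      using that I S card_mono[OF I S] by (auto simp: Suc_le_eq card_gt_0_iff intro: finite_subset)
    have lower: "1 / (c * card (S \<omega>)) \<le> Em i \<omega>"
      if "i \<in> S \<omega>" "ereal (\<theta> i) \<le> l i (c * card (S \<omega>)) \<omega>" for i
      using elim(1) that card_S S by blast
    have upper: "1 / (c * card (S \<omega>)) \<le> Ep i \<omega>"
      if "i \<in> S \<omega>" "u i (c * card (S \<omega>)) \<omega> \<le> ereal (\<theta> i)" for i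
      using elim(1) that card_S S by blast
    have "(\<Sum>i\<in>S \<omega>. of_bool (ereal (\<theta> i) \<notin>
        {l i (c * card (S \<omega>)) \<omega> <..< u i (c * card (S \<omega>)) \<omega>}) / real (card (S \<omega>)))
      \<le> c * (\<Sum>i\<in>I. Em i \<omega> + Ep i \<omega>)"
      using E elim(2) by (intro false_coverage_average_le I S c lower upper)
        (auto simp: evalue_pair_def)
    then show ?case
      by (simp add: indicator_def)
  qed
qed

lemma nn_integral_evalue_sum_le:
  fixes \<theta> :: "nat \<Rightarrow> real" and c :: real
    and l u :: "nat \<Rightarrow> real \<Rightarrow> 'a \<Rightarrow> ereal" and Ep Em :: "nat \<Rightarrow> 'a \<Rightarrow> real"
  assumes I: "finite I" and c: "0 \<le> c"
    and E: "\<And>i. i \<in> I \<Longrightarrow> evalue_pair M (\<theta> i) (l i) (u i) (Ep i) (Em i)"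
  shows "(\<integral>\<^sup>+ \<omega>. ennreal (c * (\<Sum>i\<in>I. Em i \<omega> + Ep i \<omega>)) \<partial>M) \<le> ennreal (2 * c * card I)"
proof -
  have "(\<integral>\<^sup>+ \<omega>. ennreal (c * (\<Sum>i\<in>I. Em i \<omega> + Ep i \<omega>)) \<partial>M)
      = (\<integral>\<^sup>+ \<omega>. ennreal c * ennreal (\<Sum>i\<in>I. Em i \<omega> + Ep i \<omega>) \<partial>M)"
  proof (intro nn_integral_cong)
    fix \<omega> assume "\<omega> \<in> space M"
    then have "0 \<le> (\<Sum>i\<in>I. Em i \<omega> + Ep i \<omega>)"
      using E by (intro sum_nonneg) (rule evalue_pair_sum_nonneg)
    then show "ennreal (c * (\<Sum>i\<in>I. Em i \<omega> + Ep i \<omega>))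
        = ennreal c * ennreal (\<Sum>i\<in>I. Em i \<omega> + Ep i \<omega>)"
      using c by (simp add: ennreal_mult)
  qed
  also have "\<dots> = ennreal c * (\<integral>\<^sup>+ \<omega>. ennreal (\<Sum>i\<in>I. Em i \<omega> + Ep i \<omega>) \<partial>M)"
    using E by (intro nn_integral_cmult measurable_compose[OF _ measurable_ennreal]
        borel_measurable_sum evalue_pair_sum_measurable)
  also have "\<dots> \<le> ennreal c * (of_nat (card I) * 2)"
    using E by (intro mult_left_mono nn_integral_sum_le I)
      (auto intro: evalue_pair_sum_measurable evalue_pair_sum_nonneg evalue_pair_sum_nn_integral)
  also have "\<dots> = ennreal (2 * c * card I)"
    using c by (simp add: ennreal_mult ennreal_of_nat_eq_real_of_nat mult_ac)
  finally show ?thesis .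
qed

lemma false_coverage_rate_le:
  fixes S :: "'a \<Rightarrow> nat set" and \<theta> :: "nat \<Rightarrow> real" and \<alpha> :: real
    and l u :: "nat \<Rightarrow> real \<Rightarrow> 'a \<Rightarrow> ereal" and Ep Em :: "nat \<Rightarrow> 'a \<Rightarrow> real"
  assumes I: "finite I" "I \<noteq> {}" and S: "\<And>\<omega>. S \<omega> \<subseteq> I"
    and \<alpha>: "0 < \<alpha>" "\<alpha> \<le> 1"
    and E: "\<And>i. i \<in> I \<Longrightarrow> evalue_pair M (\<theta> i) (l i) (u i) (Ep i) (Em i)"
  shows "(\<integral>\<^sup>+ \<omega>. ennreal (\<Sum>i\<in>S \<omega>.
            indicator {\<omega>. ereal (\<theta> i) \<notin>
              {l i (\<alpha> * card (S \<omega>) / (2 * card I)) \<omega> <..< u i (\<alpha> * card (S \<omega>) / (2 * card I)) \<omega>}} \<omega>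
            / real (card (S \<omega>))) \<partial>M) \<le> ennreal \<alpha>"
proof -
  define c where "c = \<alpha> / (2 * card I)"
  have card: "0 < card I"
    using I by (simp add: card_gt_0_iff)
  then have c: "0 < c" "c * card I < 1"
    using \<alpha> by (simp_all add: c_def)
  have "(\<integral>\<^sup>+ \<omega>. ennreal (\<Sum>i\<in>S \<omega>. indicator {\<omega>. ereal (\<theta> i) \<notin>
        {l i (c * card (S \<omega>)) \<omega> <..< u i (c * card (S \<omega>)) \<omega>}} \<omega> / real (card (S \<omega>))) \<partial>M)
      \<le> (\<integral>\<^sup>+ \<omega>. ennreal (c * (\<Sum>i\<in>I. Em i \<omega> + Ep i \<omega>)) \<partial>M)"
    using AE_false_coverage_average_le[where M = M and S = S and \<theta> = \<theta> and l = l and u = u,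
        OF I(1) S c E]
    by (intro nn_integral_mono_AE) (auto elim!: AE_mp intro!: ennreal_leI)
  also have "\<dots> \<le> ennreal (2 * c * card I)"
    using I(1) c E by (intro nn_integral_evalue_sum_le) auto
  also have "2 * c * card I = \<alpha>"
    using card by (simp add: c_def)
  finally show ?thesis
    by (simp add: c_def mult.commute)
qed

lemma Shat_subset: "Shat k m a L U T \<omega> \<subseteq> {1..k}"
  by (induction T) (auto simp: Let_def)

theorem theorem2:
  fixes M :: "'a measure" and F :: "nat \<Rightarrow> 'a measure"
    and k m :: nat and \<theta> :: "nat \<Rightarrow> real"
    and L U :: "nat \<Rightarrow> nat \<Rightarrow> real \<Rightarrow> 'a \<Rightarrow> ereal"
  assumes M: "prob_space M"
    and F: "is_filtration M F"
    and k: "2 \<le> k" and m: "1 \<le> m" "m \<le> k - 1"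
    and \<theta>_ord: "\<And>i j. 1 \<le> i \<Longrightarrow> i \<le> j \<Longrightarrow> j \<le> k \<Longrightarrow> \<theta> j \<le> \<theta> i"
    and adaptL: "\<And>i T \<beta>. i \<in> {1..k} \<Longrightarrow> 1 \<le> T \<Longrightarrow> 0 < \<beta> \<Longrightarrow> \<beta> < 1 \<Longrightarrow>
                   L i T \<beta> \<in> borel_measurable (F T)"
    and adaptU: "\<And>i T \<beta>. i \<in> {1..k} \<Longrightarrow> 1 \<le> T \<Longrightarrow> 0 < \<beta> \<Longrightarrow> \<beta> < 1 \<Longrightarrow>
                   U i T \<beta> \<in> borel_measurable (F T)"
    and LU: "\<And>i T \<beta> \<omega>. i \<in> {1..k} \<Longrightarrow> 1 \<le> T \<Longrightarrow> 0 < \<beta> \<Longrightarrow> \<beta> < 1 \<Longrightarrow>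
                   \<omega> \<in> space M \<Longrightarrow> L i T \<beta> \<omega> \<le> U i T \<beta> \<omega>"
    and csL: "\<And>i \<beta>. i \<in> {1..k} \<Longrightarrow> 0 < \<beta> \<Longrightarrow> \<beta> < 1 \<Longrightarrow>
                   measure M {\<omega> \<in> space M. \<exists>T\<ge>1. ereal (\<theta> i) \<le> L i T \<beta> \<omega>} \<le> \<beta>"
    and csU: "\<And>i \<beta>. i \<in> {1..k} \<Longrightarrow> 0 < \<beta> \<Longrightarrow> \<beta> < 1 \<Longrightarrow>
                   measure M {\<omega> \<in> space M. \<exists>T\<ge>1. ereal (\<theta> i) \<ge> U i T \<beta> \<omega>} \<le> \<beta>"
    and evalues: "\<And>i \<tau>. i \<in> {1..k} \<Longrightarrow> is_stopping_time M F \<tau> \<Longrightarrow>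
                   (AE \<omega> in M. \<tau> \<omega> \<noteq> \<infinity>) \<Longrightarrow>
                   \<exists>Ep Em :: 'a \<Rightarrow> real.
                      Ep \<in> borel_measurable M \<and> Em \<in> borel_measurable M \<and>
                      (\<forall>\<omega>\<in>space M. 0 \<le> Ep \<omega> \<and> 0 \<le> Em \<omega>) \<and>
                      (\<integral>\<^sup>+ \<omega>. ennreal (Ep \<omega>) \<partial>M) \<le> 1 \<and>
                      (\<integral>\<^sup>+ \<omega>. ennreal (Em \<omega>) \<partial>M) \<le> 1 \<and>
                      (\<forall>\<beta>. 0 < \<beta> \<longrightarrow> \<beta> < 1 \<longrightarrow>
                         (AE \<omega> in M.
                            indicator {\<omega>. ereal (\<theta> i) \<le> stopped (\<lambda>T. L i T \<beta>) \<tau> \<omega>} \<omega>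
                              \<le> (indicator {\<omega>. Em \<omega> \<ge> 1 / \<beta>} \<omega> :: real) \<and>
                            indicator {\<omega>. ereal (\<theta> i) \<ge> stopped (\<lambda>T. U i T \<beta>) \<tau> \<omega>} \<omega>
                              \<le> (indicator {\<omega>. Ep \<omega> \<ge> 1 / \<beta>} \<omega> :: real)))"
  shows "\<forall>\<alpha> \<tau>. 0 < \<alpha> \<longrightarrow> \<alpha> < 1 \<longrightarrow> is_stopping_time M F \<tau> \<longrightarrow>
           (AE \<omega> in M. \<tau> \<omega> \<noteq> \<infinity>) \<longrightarrow>
           (let \<alpha>km = \<alpha> / (2 * real m * real (k - m));
                S = (\<lambda>\<omega>. stopped (Shat k m \<alpha>km L U) \<tau> \<omega>);
                \<alpha>t = (\<lambda>\<omega>. \<alpha> * real (card (S \<omega>)) / (2 * real k))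
            in (\<integral>\<^sup>+ \<omega>. ennreal (\<Sum>i\<in>S \<omega>.
                   indicator {\<omega>. ereal (\<theta> i) \<notin>
                       {stopped (\<lambda>T. L i T (\<alpha>t \<omega>)) \<tau> \<omega> <..< stopped (\<lambda>T. U i T (\<alpha>t \<omega>)) \<tau> \<omega>}} \<omega>
                   / real (card (S \<omega>))) \<partial>M) \<le> ennreal \<alpha>)"
proof (intro allI impI, goal_cases)
  case (1 \<alpha> \<tau>)
  note \<alpha> = "1"(1,2) and \<tau> = "1"(3,4)
  define S where "S = stopped (Shat k m (\<alpha> / (2 * real m * real (k - m))) L U) \<tau>"
  have "\<forall>i\<in>{1..k}. \<exists>Ep Em. evalue_pair M (\<theta> i)
      (\<lambda>\<beta>. stopped (\<lambda>T. L i T \<beta>) \<tau>) (\<lambda>\<beta>. stopped (\<lambda>T. U i T \<beta>) \<tau>) Ep Em"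
    using evalues[OF _ \<tau>] unfolding evalue_pair_def by blast
  then obtain Ep Em where "\<And>i. i \<in> {1..k} \<Longrightarrow> evalue_pair M (\<theta> i)
      (\<lambda>\<beta>. stopped (\<lambda>T. L i T \<beta>) \<tau>) (\<lambda>\<beta>. stopped (\<lambda>T. U i T \<beta>) \<tau>) (Ep i) (Em i)"
    by metis
  moreover have "S \<omega> \<subseteq> {1..k}" for \<omega>
    unfolding S_def stopped_def by (rule Shat_subset)
  ultimately have "(\<integral>\<^sup>+ \<omega>. ennreal (\<Sum>i\<in>S \<omega>.
            indicator {\<omega>. ereal (\<theta> i) \<notin>
              {stopped (\<lambda>T. L i T (\<alpha> * card (S \<omega>) / (2 * card {1..k}))) \<tau> \<omega> <..<
               stopped (\<lambda>T. U i T (\<alpha> * card (S \<omega>) / (2 * card {1..k}))) \<tau> \<omega>}} \<omega>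
            / real (card (S \<omega>))) \<partial>M) \<le> ennreal \<alpha>"
    using k \<alpha> by (intro false_coverage_rate_le) auto
  then show ?case
    by (simp add: S_def Let_def)
qed

end
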